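(* Fix weights $w_i\ge0$ with $\sum_{i\in N}w_i=1$. There exists a unique PAF $\psi:\mathcal P^N\to\mathcal P$ that is Level-SP and satisfies weighted proportionality with respect to $\mathbf w$. It is the PAF whose associated CAF is $$\Psi(P_1,\dots,P_n)(a)=\mu_{\mathbf w}(P_1(a),\dots,P_n(a))\quad\text{for all }a\in\Lambda,\ (P_1,\dots,P_n)\in\mathcal C^N,$$ where $\mu_{\mathbf w}(\mathbf r)=\sup\{y\in[0,1]:\sum_{i:\,r_i\ge y}w_i\ge y\}$; in particular this PAF is certainty preserving.
   Context: Let $N=\{1,\dots,n\}$, $\Lambda\subseteq\mathbb R$ a nonempty Borel set, $\mathcal P$ the Borel probability measures on $\Lambda$, $\mathcal C$ the CDFs on $\Lambda$, $\pi(p)(a)=p(\{x\in\Lambda:x\le a\})$. A PAF is a map $\psi:\mathcal P^N\to\mathcal P$ with associated CAF $\Psi$ given by $\Psi(\pi(p_1),\dots,\pi(p_n))=\pi(\psi(p_1,\dots,p_n))$; $P_i=\pi(p_i)$. $\mathbf z_{-i}(z_i')$ is $\mathbf z$ with $i$-th coordinate replaced by $z_i'$. $\psi$ is Level-SP if for every $i$, $\mathbf P$, $P_i'$, $a$: $P_i(a)<\Psi(\mathbf P)(a)\Rightarrow\Psi(\mathbf P)(a)\le\Psi(\mathbf P_{-i}(P_i'))(a)$ and $P_i(a)>\Psi(\mathbf P)(a)\Rightarrow\Psi(\mathbf P)(a)\ge\Psi(\mathbf P_{-i}(P_i'))(a)$. $\delta_a$ denotes the Dirac mass at $a$. $\psi$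 satisfies weighted proportionality (w.r.t. $\mathbf w$) if $\psi(\delta_{a_1},\dots,\delta_{a_n})=\sum_{i\in N}w_i\delta_{a_i}$ for all $(a_1,\dots,a_n)\in\Lambda^N$. $\psi$ is certainty preserving if for every profile $\mathbf p$ and Borel $A\subseteq\Lambda$, $p_i(A)=1$ for all $i$ implies $\psi(\mathbf p)(A)=1$. *)

theory Defs
  imports "HOL-Probability.Probability"
begin

text \<open>Borel probability measures on \<Lambda>, represented as probability measures on the
  subspace measurable space (restrict_space borel \<Lambda>).\<close>
definition Pset :: "real set \<Rightarrow> real measure set" where
  "Pset \<Lambda> = {p. prob_space p \<and> sets p = sets (restrict_space borel \<Lambda>)}"

definition cdf_pi :: "real set \<Rightarrow> real measure \<Rightarrow> real \<Rightarrow> real" where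
  "cdf_pi \<Lambda> p a = measure p {x\<in>\<Lambda>. x \<le> a}"

definition profiles :: "nat \<Rightarrow> real set \<Rightarrow> (nat \<Rightarrow> real measure) set" where
  "profiles n \<Lambda> = PiE {1..n} (\<lambda>_. Pset \<Lambda>)"

definition is_PAF :: "nat \<Rightarrow> real set \<Rightarrow> ((nat \<Rightarrow> real measure) \<Rightarrow> real measure) \<Rightarrow> bool" where
  "is_PAF n \<Lambda> \<psi> = (\<forall>p\<in>profiles n \<Lambda>. \<psi> p \<in> Pset \<Lambda>)"

text \<open>Level strategy-proofness, stated via the associated CAF:
  Psi(pi(p_1),...,pi(p_n)) = pi(psi(p)).\<close>
definition level_SP :: "nat \<Rightarrow> real set \<Rightarrow> ((nat \<Rightarrow> real measure) \<Rightarrow> real measure) \<Rightarrow> bool" where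
  "level_SP n \<Lambda> \<psi> =
    (\<forall>i\<in>{1..n}. \<forall>p\<in>profiles n \<Lambda>. \<forall>p'\<in>Pset \<Lambda>. \<forall>a\<in>\<Lambda>.
      (cdf_pi \<Lambda> (p i) a < cdf_pi \<Lambda> (\<psi> p) a \<longrightarrow>
         cdf_pi \<Lambda> (\<psi> p) a \<le> cdf_pi \<Lambda> (\<psi> (p(i := p'))) a) \<and>
      (cdf_pi \<Lambda> (p i) a > cdf_pi \<Lambda> (\<psi> p) a \<longrightarrow>
         cdf_pi \<Lambda> (\<psi> p) a \<ge> cdf_pi \<Lambda> (\<psi> (p(i := p'))) a))"

definition dirac_on :: "real set \<Rightarrow> real \<Rightarrow> real measure" where
  "dirac_on \<Lambda> a = return (restrict_space borel \<Lambda>) a"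

definition mix_dirac :: "nat \<Rightarrow> real set \<Rightarrow> (nat \<Rightarrow> real) \<Rightarrow> (nat \<Rightarrow> real) \<Rightarrow> real measure" where
  "mix_dirac n \<Lambda> w a = measure_of \<Lambda> (sets (restrict_space borel \<Lambda>))
     (\<lambda>A. \<Sum>i\<in>{1..n}. ennreal (w i) * indicator A (a i))"

definition weighted_prop ::
  "nat \<Rightarrow> real set \<Rightarrow> (nat \<Rightarrow> real) \<Rightarrow> ((nat \<Rightarrow> real measure) \<Rightarrow> real measure) \<Rightarrow> bool" where
  "weighted_prop n \<Lambda> w \<psi> =
    (\<forall>a. (\<forall>i\<in>{1..n}. a i \<in> \<Lambda>) \<longrightarrow>
       \<psi> (\<lambda>i\<in>{1..n}. dirac_on \<Lambda> (a i)) = mix_dirac n \<Lambda> w a)"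

definition certainty_preserving :: "nat \<Rightarrow> real set \<Rightarrow> ((nat \<Rightarrow> real measure) \<Rightarrow> real measure) \<Rightarrow> bool" where
  "certainty_preserving n \<Lambda> \<psi> =
    (\<forall>p\<in>profiles n \<Lambda>. \<forall>A\<in>sets (restrict_space borel \<Lambda>).
       (\<forall>i\<in>{1..n}. measure (p i) A = 1) \<longrightarrow> measure (\<psi> p) A = 1)"

definition mu_w :: "nat \<Rightarrow> (nat \<Rightarrow> real) \<Rightarrow> (nat \<Rightarrow> real) \<Rightarrow> real" where
  "mu_w n w r = Sup {y\<in>{0..1}. (\<Sum>i\<in>{i\<in>{1..n}. r i \<ge> y}. w i) \<ge> y}"

end

theory Submission
  imports Defs
begin

text \<open>It is monotone and \<open>1\<close>-Lipschitz for the sup norm, and changing a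
  coordinate that lies strictly below (above) the value cannot decrease (increase) it. Hence
  \<open>a \<mapsto> mu_w n w (\<lambda>i. P\<^sub>i a)\<close> is a CDF; its increments are dominated by those of \<open>\<Sum>\<^sub>i P\<^sub>i\<close>,
  so the measure lives on \<open>\<Lambda>\<close> and preserves certainty, and it is Level-SP and weighted
  proportional.

  Conversely, let \<open>\<psi>\<close> be Level-SP and weighted proportional, and \<open>a < b\<close> in \<open>\<Lambda>\<close>. Replacing the
  agents one at a time by \<open>\<delta>\<^sub>a\<close> (those with \<open>P\<^sub>i a \<ge> \<Psi>(P) a\<close>) or \<open>\<delta>\<^sub>b\<close> (the others) never
  decreases \<open>\<Psi>(\<cdot>) a\<close>, and weighted proportionality evaluates the final profile: the weight of
  \<open>{i. P\<^sub>i a \<ge> \<Psi>(P) a}\<close> is at least \<open>\<Psi>(P) a\<close>. Symmetrically the weight of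
  \<open>{i. P\<^sub>i a > \<Psi>(P) a}\<close> is at most \<open>\<Psi>(P) a\<close>, and these two inequalities characterize \<open>mu_w\<close>.
  A measure on \<open>\<Lambda>\<close> is determined by its CDF on \<open>\<Lambda>\<close>, which gives uniqueness.\<close>

section \<open>The weighted threshold \<open>mu_w\<close>\<close>

definition weight_ge :: "nat \<Rightarrow> (nat \<Rightarrow> real) \<Rightarrow> (nat \<Rightarrow> real) \<Rightarrow> real \<Rightarrow> real" where
  "weight_ge n w r y = (\<Sum>i\<in>{i\<in>{1..n}. y \<le> r i}. w i)"

definition weight_gt :: "nat \<Rightarrow> (nat \<Rightarrow> real) \<Rightarrow> (nat \<Rightarrow> real) \<Rightarrow> real \<Rightarrow> real" where
  "weight_gt n w r y = (\<Sum>i\<in>{i\<in>{1..n}. y < r i}. w i)"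

locale weight_vector =
  fixes n :: nat and w :: "nat \<Rightarrow> real"
  assumes weight_nonneg: "i \<in> {1..n} \<Longrightarrow> 0 \<le> w i"
    and weight_sum: "(\<Sum>i\<in>{1..n}. w i) = 1"
begin

lemma one_in_agents: "1 \<in> {1..n}"
  using weight_sum by (cases n) auto

lemma sum_weight_subset:
  assumes "A \<subseteq> {1..n}"
  shows "0 \<le> sum w A" "sum w A \<le> 1"
proof -
  have "finite A" using assms finite_subset by blast
  thus "0 \<le> sum w A" using assms weight_nonneg by (intro sum_nonneg) auto
  have "sum w A \<le> sum w {1..n}" using assms weight_nonneg by (intro sum_mono2) auto
  thus "sum w A \<le> 1" using weight_sum by simp
qed

lemma weight_ge_bounds: "0 \<le> weight_ge n w r y" "weight_ge n w r y \<le> 1"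
  unfolding weight_ge_def by (rule sum_weight_subset; auto)+

lemma weight_gt_bounds: "0 \<le> weight_gt n w r y" "weight_gt n w r y \<le> 1"
  unfolding weight_gt_def by (rule sum_weight_subset; auto)+

lemma weight_ge_mono:
  assumes "x \<le> y" "\<forall>i\<in>{1..n}. r i \<le> r' i"
  shows "weight_ge n w r y \<le> weight_ge n w r' x"
  unfolding weight_ge_def
  using assms weight_nonneg by (intro sum_mono2) force+

lemma mu_w_bdd: "bdd_above {y\<in>{0..1}. y \<le> weight_ge n w r y}"
  by (rule bdd_aboveI[of _ 1]) auto

lemma mu_w_eq_Sup_weight_ge: "mu_w n w r = Sup {y\<in>{0..1}. y \<le> weight_ge n w r y}"
  by (simp add: mu_w_def weight_ge_def)

lemma zero_le_mu_w_set: "0 \<in> {y\<in>{0..1}. y \<le> weight_ge n w r y}"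
  using weight_ge_bounds by simp

lemma le_mu_w:
  assumes "0 \<le> y" "y \<le> 1" "y \<le> weight_ge n w r y"
  shows "y \<le> mu_w n w r"
  unfolding mu_w_eq_Sup_weight_ge by (rule cSup_upper[OF _ mu_w_bdd]) (use assms in auto)

lemma mu_w_le:
  assumes "\<And>y. 0 \<le> y \<Longrightarrow> y \<le> 1 \<Longrightarrow> y \<le> weight_ge n w r y \<Longrightarrow> y \<le> m"
  shows "mu_w n w r \<le> m"
  unfolding mu_w_eq_Sup_weight_ge
proof (rule cSup_least)
  show "{y\<in>{0..1}. y \<le> weight_ge n w r y} \<noteq> {}" using zero_le_mu_w_set by blast
qed (auto intro: assms)

lemma mu_w_nonneg: "0 \<le> mu_w n w r"
  by (rule le_mu_w) (use weight_ge_bounds in auto)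

lemma mu_w_le_one: "mu_w n w r \<le> 1"
  by (rule mu_w_le) auto

text \<open>The supremum is attained: \<open>weight_ge\<close> is piecewise constant and left-continuous in the level,
  so it is constant on a left neighbourhood \<open>(e, mu_w n w r]\<close>.\<close>
lemma mu_w_le_weight_ge: "mu_w n w r \<le> weight_ge n w r (mu_w n w r)"
proof (rule ccontr)
  let ?m = "mu_w n w r"
  assume neg: "\<not> ?m \<le> weight_ge n w r ?m"
  define e where "e = Max (insert (weight_ge n w r ?m) (r ` {i\<in>{1..n}. r i < ?m}))"
  have e_lt: "e < ?m" unfolding e_def using neg by (subst Max_less_iff) auto
  have "y \<le> e" if y: "0 \<le> y" "y \<le> 1" "y \<le> weight_ge n w r y" for y
  proof (rule ccontr)
    assume "\<not> y \<le> e"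
    moreover have "y \<le> ?m" using le_mu_w[OF y] .
    moreover have "r i < ?m \<Longrightarrow> i \<in> {1..n} \<Longrightarrow> r i \<le> e" for i unfolding e_def by auto
    ultimately have "{i\<in>{1..n}. y \<le> r i} = {i\<in>{1..n}. ?m \<le> r i}" by force
    hence "weight_ge n w r y = weight_ge n w r ?m" by (simp add: weight_ge_def)
    moreover have "weight_ge n w r ?m \<le> e" unfolding e_def by simp
    ultimately show False using y(3) \<open>\<not> y \<le> e\<close> by linarith
  qed
  hence "?m \<le> e" by (rule mu_w_le)
  thus False using e_lt by simp
qed

lemma weight_gt_le_mu_w: "weight_gt n w r (mu_w n w r) \<le> mu_w n w r"
proof (rule ccontr)
  let ?m = "mu_w n w r"
  define K where "K = {i\<in>{1..n}. ?m < r i}"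
  assume neg: "\<not> weight_gt n w r ?m \<le> ?m"
  have "K \<noteq> {}"
  proof
    assume "K = {}"
    hence "weight_gt n w r ?m = 0" unfolding weight_gt_def K_def by (metis sum.empty)
    thus False using neg mu_w_nonneg[of r] by simp
  qed
  define y where "y = min (weight_gt n w r ?m) (Min (r ` K))"
  have "?m < Min (r ` K)" using \<open>K \<noteq> {}\<close> by (subst Min_gr_iff) (auto simp: K_def)
  hence y_gt: "?m < y" using neg by (simp add: y_def)
  have "weight_gt n w r ?m \<le> weight_ge n w r y"
    unfolding weight_gt_def weight_ge_def using weight_nonneg
    by (intro sum_mono2) (auto simp: y_def K_def intro: min.coboundedI2)
  hence "y \<le> mu_w n w r"
    using y_gt mu_w_nonneg[of r] weight_gt_bounds[of r ?m] by (intro le_mu_w) (auto simp: y_def)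
  thus False using y_gt by simp
qed

lemma mu_w_eq_iff:
  "mu_w n w r = c \<longleftrightarrow>
     0 \<le> c \<and> c \<le> 1 \<and> c \<le> weight_ge n w r c \<and> weight_gt n w r c \<le> c"
proof
  assume "mu_w n w r = c"
  thus "0 \<le> c \<and> c \<le> 1 \<and> c \<le> weight_ge n w r c \<and> weight_gt n w r c \<le> c"
    using mu_w_nonneg mu_w_le_one mu_w_le_weight_ge weight_gt_le_mu_w by blast
next
  assume c: "0 \<le> c \<and> c \<le> 1 \<and> c \<le> weight_ge n w r c \<and> weight_gt n w r c \<le> c"
  have "y \<le> c" if "y \<le> weight_ge n w r y" for y
  proof (rule ccontr)
    assume "\<not> y \<le> c"
    hence "weight_ge n w r y \<le> weight_gt n w r c"
      unfolding weight_gt_def weight_ge_def using weight_nonneg by (intro sum_mono2) auto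
    thus False using that c \<open>\<not> y \<le> c\<close> by linarith
  qed
  thus "mu_w n w r = c" using c by (intro antisym mu_w_le le_mu_w) auto
qed

lemma mu_w_cong:
  assumes "\<And>i. i \<in> {1..n} \<Longrightarrow> r i = r' i"
  shows "mu_w n w r = mu_w n w r'"
proof -
  have "{i\<in>{1..n}. y \<le> r i} = {i\<in>{1..n}. y \<le> r' i}" for y using assms by auto
  thus ?thesis by (simp add: mu_w_def)
qed

lemma mu_w_indicator:
  assumes "H \<subseteq> {1..n}"
  shows "mu_w n w (\<lambda>i. if i \<in> H then 1 else 0) = sum w H"
proof (subst mu_w_eq_iff, intro conjI)
  have fin: "finite H" using assms finite_subset by blast
  show "0 \<le> sum w H" "sum w H \<le> 1" using sum_weight_subset[OF assms] by auto
  show "sum w H \<le> weight_ge n w (\<lambda>i. if i \<in> H then 1 else 0) (sum w H)"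
    unfolding weight_ge_def using assms weight_nonneg \<open>sum w H \<le> 1\<close> by (intro sum_mono2) auto
  show "weight_gt n w (\<lambda>i. if i \<in> H then 1 else 0) (sum w H) \<le> sum w H"
    unfolding weight_gt_def using assms fin weight_nonneg \<open>0 \<le> sum w H\<close>
    by (intro sum_mono2) (auto split: if_splits)
qed

lemma mu_w_mono:
  assumes "\<And>i. i \<in> {1..n} \<Longrightarrow> r i \<le> r' i"
  shows "mu_w n w r \<le> mu_w n w r'"
proof (rule le_mu_w)
  have "mu_w n w r \<le> weight_ge n w r (mu_w n w r)" by (rule mu_w_le_weight_ge)
  also have "\<dots> \<le> weight_ge n w r' (mu_w n w r)" using assms by (intro weight_ge_mono) auto
  finally show "mu_w n w r \<le> weight_ge n w r' (mu_w n w r)" .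
qed (rule mu_w_nonneg mu_w_le_one)+

lemma mu_w_add_const:
  assumes "0 \<le> d"
  shows "mu_w n w (\<lambda>i. r i + d) \<le> mu_w n w r + d"
proof -
  let ?m = "mu_w n w (\<lambda>i. r i + d)"
  have "?m - d \<le> mu_w n w r" if "0 \<le> ?m - d"
  proof (rule le_mu_w)
    have "?m \<le> weight_ge n w (\<lambda>i. r i + d) ?m" by (rule mu_w_le_weight_ge)
    also have "\<dots> = weight_ge n w r (?m - d)" by (simp add: weight_ge_def algebra_simps)
    finally show "?m - d \<le> weight_ge n w r (?m - d)" using assms by linarith
  qed (use that mu_w_le_one[of "\<lambda>i. r i + d"] assms in auto)
  thus ?thesis using mu_w_nonneg[of r] by linarith
qed

lemma mu_w_lipschitz:
  assumes "\<And>i. i \<in> {1..n} \<Longrightarrow> \<bar>r i - r' i\<bar> \<le> d"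
  shows "\<bar>mu_w n w r - mu_w n w r'\<bar> \<le> d"
proof -
  have d: "0 \<le> d" using assms[OF one_in_agents] by linarith
  have "mu_w n w r \<le> mu_w n w r' + d" if "\<And>i. i \<in> {1..n} \<Longrightarrow> r i \<le> r' i + d" for r r'
    using mu_w_mono[of r "\<lambda>i. r' i + d", OF that] mu_w_add_const[OF d, of r'] by linarith
  from this[of r r'] this[of r' r] show ?thesis using assms by (force simp: abs_le_iff)
qed

lemma mu_w_const_one:
  assumes "\<And>i. i \<in> {1..n} \<Longrightarrow> r i = 1"
  shows "mu_w n w r = 1"
proof -
  have "mu_w n w r = mu_w n w (\<lambda>i. if i \<in> {1..n} then 1 else 0)" using assms by (intro mu_w_cong) simp
  also have "\<dots> = 1" using mu_w_indicator[of "{1..n}"] weight_sum by simp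
  finally show ?thesis .
qed

lemma mu_w_zero: "mu_w n w (\<lambda>i. 0) = 0"
  using mu_w_indicator[of "{}"] by simp

lemma mu_w_update_below:
  assumes "r i < mu_w n w r"
  shows "mu_w n w r \<le> mu_w n w (r(i := t))"
proof (rule le_mu_w)
  have "mu_w n w r \<le> weight_ge n w r (mu_w n w r)" by (rule mu_w_le_weight_ge)
  also have "\<dots> \<le> weight_ge n w (r(i := t)) (mu_w n w r)"
    unfolding weight_ge_def using assms weight_nonneg by (intro sum_mono2) auto
  finally show "mu_w n w r \<le> weight_ge n w (r(i := t)) (mu_w n w r)" .
qed (rule mu_w_nonneg mu_w_le_one)+

lemma mu_w_update_above:
  assumes "mu_w n w r < r i"
  shows "mu_w n w (r(i := t)) \<le> mu_w n w r"
proof (rule mu_w_le, rule ccontr)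
  fix y assume y: "y \<le> weight_ge n w (r(i := t)) y" and "\<not> y \<le> mu_w n w r"
  hence "weight_ge n w (r(i := t)) y \<le> weight_gt n w r (mu_w n w r)"
    unfolding weight_ge_def weight_gt_def using assms weight_nonneg by (intro sum_mono2) auto
  thus False using y weight_gt_le_mu_w[of r] \<open>\<not> y \<le> mu_w n w r\<close> by linarith
qed

end

section \<open>Probability measures on \<open>\<Lambda>\<close>\<close>

lemma (in real_distribution) measure_eq_0_if_disjoint:
  assumes "\<Lambda> \<in> sets borel" "measure M (- \<Lambda>) = 0" "A \<in> sets borel" "A \<inter> \<Lambda> = {}"
  shows "measure M A = 0"
proof -
  have "measure M A \<le> measure M (- \<Lambda>)" using assms by (intro finite_measure_mono) auto
  thus ?thesis using assms(2) measure_nonneg[of M A] by linarith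
qed

lemma (in real_distribution) cdf_eq_across_null_gap:
  assumes \<Lambda>: "\<Lambda> \<in> sets borel" and null: "measure M (- \<Lambda>) = 0" and "s \<le> x"
  shows "{s<..x} \<inter> \<Lambda> = {} \<Longrightarrow> cdf M x = cdf M s"
    and "{s..x} \<inter> \<Lambda> = {} \<Longrightarrow> cdf M x = measure M {..<s}"
proof -
  note gap = measure_eq_0_if_disjoint[OF \<Lambda> null]
  have "measure M {..x} = measure M {..s} + measure M {s<..x}"
    using \<open>s \<le> x\<close> by (subst finite_measure_Union[symmetric]) (auto intro: arg_cong[where f="measure M"])
  thus "{s<..x} \<inter> \<Lambda> = {} \<Longrightarrow> cdf M x = cdf M s" using gap by (simp add: cdf_def)
  have "measure M {..x} = measure M {..<s} + measure M {s..x}"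
    using \<open>s \<le> x\<close> by (subst finite_measure_Union[symmetric]) (auto intro: arg_cong[where f="measure M"])
  thus "{s..x} \<inter> \<Lambda> = {} \<Longrightarrow> cdf M x = measure M {..<s}" using gap by (simp add: cdf_def)
qed

lemma measure_lessThan_eq_if_cdf_eq_on:
  fixes M N :: "real measure"
  assumes M: "real_distribution M" and N: "real_distribution N"
    and S: "s islimpt S" "S \<subseteq> {..<s}" and eq: "\<And>a. a \<in> S \<Longrightarrow> cdf M a = cdf N a"
  shows "measure M {..<s} = measure N {..<s}"
proof -
  have "at s within S \<le> at_left s" using S(2) by (intro at_le) auto
  hence lim: "(cdf K \<longlongrightarrow> measure K {..<s}) (at s within S)" if "real_distribution K" for K
    using finite_borel_measure.cdf_at_left[OF real_distribution.finite_borel_measure_M[OF that]]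
    by (rule tendsto_mono)
  have nontrivial: "at s within S \<noteq> bot" using S(1) trivial_limit_within by blast
  have "eventually (\<lambda>y. cdf M y = cdf N y) (at s within S)"
    unfolding eventually_at_filter by (intro always_eventually) (auto intro: eq)
  hence "(cdf N \<longlongrightarrow> measure M {..<s}) (at s within S)"
    using lim[OF M] by (rule tendsto_cong[THEN iffD1])
  thus ?thesis using lim[OF N] nontrivial by (intro tendsto_unique)
qed

text \<open>At a point \<open>x\<close>, let \<open>s\<close> be the supremum of \<open>\<Lambda> \<inter> {..x}\<close>. If \<open>s \<in> \<Lambda>\<close> the CDFs at \<open>x\<close> agree
  with those at \<open>s\<close>; otherwise they are left limits at \<open>s\<close>, which can be taken along \<open>\<Lambda>\<close>.\<close>
lemma real_distribution_eqI_cdf_on: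
  fixes M N :: "real measure"
  assumes M: "real_distribution M" and N: "real_distribution N" and \<Lambda>: "\<Lambda> \<in> sets borel"
    and null: "measure M (- \<Lambda>) = 0" "measure N (- \<Lambda>) = 0"
    and eq: "\<And>a. a \<in> \<Lambda> \<Longrightarrow> cdf M a = cdf N a"
  shows "M = N"
proof -
  note gapM = real_distribution.cdf_eq_across_null_gap[OF M \<Lambda> null(1)]
  note gapN = real_distribution.cdf_eq_across_null_gap[OF N \<Lambda> null(2)]
  have "cdf M x = cdf N x" for x
  proof (cases "\<Lambda> \<inter> {..x} = {}")
    case True
    thus ?thesis
      using real_distribution.measure_eq_0_if_disjoint[OF M \<Lambda> null(1), of "{..x}"]
        real_distribution.measure_eq_0_if_disjoint[OF N \<Lambda> null(2), of "{..x}"]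
      by (auto simp: cdf_def Int_commute)
  next
    case ne: False
    let ?S = "\<Lambda> \<inter> {..x}"
    let ?s = "Sup ?S"
    have bdd: "bdd_above ?S" by (rule bdd_aboveI[of _ x]) auto
    have s_le: "?s \<le> x" using ne by (intro cSup_least) auto
    have above_s: "{?s<..x} \<inter> \<Lambda> = {}" using cSup_upper[OF _ bdd] by force
    show ?thesis
    proof (cases "?s \<in> \<Lambda>")
      case True
      thus ?thesis using gapM(1)[OF s_le above_s] gapN(1)[OF s_le above_s] eq by simp
    next
      case False
      have s_off: "{?s..x} \<inter> \<Lambda> = {}" using above_s False by (auto simp: set_eq_iff)
      have "?S \<subseteq> {..<?s}"
      proof
        fix y assume "y \<in> ?S"
        thus "y \<in> {..<?s}" using False cSup_upper[OF _ bdd, of y] by (cases "y = ?s") auto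
      qed
      moreover have "?s islimpt ?S" using closure_contains_Sup[OF ne bdd] False by (auto simp: closure_def)
      ultimately have "measure M {..<?s} = measure N {..<?s}"
        using eq by (intro measure_lessThan_eq_if_cdf_eq_on[OF M N]) auto
      thus ?thesis using gapM(2)[OF s_le s_off] gapN(2)[OF s_le s_off] by simp
    qed
  qed
  thus ?thesis using M N cdf_unique by blast
qed

lemma Pset_D:
  assumes "p \<in> Pset \<Lambda>"
  shows "prob_space p" "sets p = sets (restrict_space borel \<Lambda>)" "space p = \<Lambda>"
proof -
  show "prob_space p" and sets: "sets p = sets (restrict_space borel \<Lambda>)"
    using assms by (auto simp: Pset_def)
  show "space p = \<Lambda>" using sets_eq_imp_space_eq[OF sets] by (simp add: space_restrict_space)
qed

lemma sets_Pset_iff: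
  assumes "\<Lambda> \<in> sets borel" "p \<in> Pset \<Lambda>"
  shows "A \<in> sets p \<longleftrightarrow> A \<in> sets borel \<and> A \<subseteq> \<Lambda>"
  using assms by (auto simp: Pset_D(2) sets_restrict_space_iff)

context
  fixes \<Lambda> :: "real set" and p :: "real measure"
  assumes \<Lambda>: "\<Lambda> \<in> sets borel" and p: "p \<in> Pset \<Lambda>"
begin

lemma measurable_ident_Pset: "(\<lambda>x. x) \<in> measurable p borel"
  using measurable_restrict_space1[OF measurable_ident_sets[OF refl]] Pset_D(2)[OF p]
  by (simp cong: measurable_cong_sets)

lemma real_distribution_distr_Pset: "real_distribution (distr p borel (\<lambda>x. x))"
  using prob_space.real_distribution_distr[OF Pset_D(1)[OF p] measurable_ident_Pset] .

lemma measure_distr_Pset: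
  "B \<in> sets borel \<Longrightarrow> measure (distr p borel (\<lambda>x. x)) B = measure p (B \<inter> \<Lambda>)"
  using measurable_ident_Pset Pset_D(3)[OF p] by (simp add: measure_distr)

lemma cdf_distr_Pset: "cdf (distr p borel (\<lambda>x. x)) = cdf_pi \<Lambda> p"
proof
  fix a
  have "{x\<in>\<Lambda>. x \<le> a} = {..a} \<inter> \<Lambda>" by auto
  thus "cdf (distr p borel (\<lambda>x. x)) a = cdf_pi \<Lambda> p a"
    by (simp add: cdf_def cdf_pi_def measure_distr_Pset)
qed

lemma cdf_pi_Pset:
  shows "0 \<le> cdf_pi \<Lambda> p x" "cdf_pi \<Lambda> p x \<le> 1" "x \<le> y \<Longrightarrow> cdf_pi \<Lambda> p x \<le> cdf_pi \<Lambda> p y"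
    "continuous (at_right x) (cdf_pi \<Lambda> p)"
    "(cdf_pi \<Lambda> p \<longlongrightarrow> 0) at_bot" "(cdf_pi \<Lambda> p \<longlongrightarrow> 1) at_top"
proof -
  interpret real_distribution "distr p borel (\<lambda>x. x)" by (rule real_distribution_distr_Pset)
  show "0 \<le> cdf_pi \<Lambda> p x" "cdf_pi \<Lambda> p x \<le> 1" "x \<le> y \<Longrightarrow> cdf_pi \<Lambda> p x \<le> cdf_pi \<Lambda> p y"
    "continuous (at_right x) (cdf_pi \<Lambda> p)"
    "(cdf_pi \<Lambda> p \<longlongrightarrow> 0) at_bot" "(cdf_pi \<Lambda> p \<longlongrightarrow> 1) at_top"
    using cdf_nonneg cdf_bounded_prob cdf_nondecreasing cdf_is_right_cont cdf_lim_at_bot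
      cdf_lim_at_top_prob
    unfolding cdf_distr_Pset by auto
qed

end

lemma Pset_eqI_cdf_pi:
  assumes \<Lambda>: "\<Lambda> \<in> sets borel" and p: "p \<in> Pset \<Lambda>" and q: "q \<in> Pset \<Lambda>"
    and eq: "\<And>a. a \<in> \<Lambda> \<Longrightarrow> cdf_pi \<Lambda> p a = cdf_pi \<Lambda> q a"
  shows "p = q"
proof (rule measure_eqI)
  show "sets p = sets q" using Pset_D(2)[OF p] Pset_D(2)[OF q] by simp
  have "distr p borel (\<lambda>x. x) = distr q borel (\<lambda>x. x)"
    using \<Lambda> real_distribution_distr_Pset[OF \<Lambda>] measure_distr_Pset[OF \<Lambda>] cdf_distr_Pset[OF \<Lambda>] p q eq
    by (intro real_distribution_eqI_cdf_on[where \<Lambda>=\<Lambda>]) auto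
  moreover fix A assume "A \<in> sets p"
  hence "A \<in> sets borel" "A \<subseteq> \<Lambda>" using sets_Pset_iff[OF \<Lambda> p] by auto
  hence "emeasure r A = emeasure (distr r borel (\<lambda>x. x)) A" if "r \<in> Pset \<Lambda>" for r
    using measurable_ident_Pset[OF \<Lambda> that] Pset_D(3)[OF that] by (simp add: emeasure_distr Int_absorb2)
  ultimately show "emeasure p A = emeasure q A" using p q by simp
qed

lemma dirac_on_Pset: "a \<in> \<Lambda> \<Longrightarrow> dirac_on \<Lambda> a \<in> Pset \<Lambda>"
  unfolding Pset_def dirac_on_def by (auto intro!: prob_space_return simp: space_restrict_space)

lemma profiles_Pset: "p \<in> profiles n \<Lambda> \<Longrightarrow> i \<in> {1..n} \<Longrightarrow> p i \<in> Pset \<Lambda>"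
  by (auto simp: profiles_def)

lemma profiles_update: "p \<in> profiles n \<Lambda> \<Longrightarrow> i \<in> {1..n} \<Longrightarrow> q \<in> Pset \<Lambda> \<Longrightarrow> p(i := q) \<in> profiles n \<Lambda>"
  by (auto simp: profiles_def PiE_def extensional_def)

lemma dirac_profile:
  "(\<And>i. i \<in> {1..n} \<Longrightarrow> x i \<in> \<Lambda>) \<Longrightarrow> (\<lambda>i\<in>{1..n}. dirac_on \<Lambda> (x i)) \<in> profiles n \<Lambda>"
  by (auto simp: profiles_def dirac_on_Pset)

lemma cdf_pi_dirac_on:
  assumes \<Lambda>: "\<Lambda> \<in> sets borel" and a: "a \<in> \<Lambda>"
  shows "cdf_pi \<Lambda> (dirac_on \<Lambda> a) x = (if a \<le> x then 1 else 0)"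
proof -
  have "{y\<in>\<Lambda>. y \<le> x} \<in> sets (restrict_space borel \<Lambda>)"
    using \<Lambda> by (auto simp: sets_restrict_space_iff)
  thus ?thesis using a by (simp add: cdf_pi_def dirac_on_def measure_return)
qed

lemma
  fixes \<Lambda> :: "real set"
  shows sets_mix_dirac: "sets (mix_dirac n \<Lambda> w a) = sets (restrict_space borel \<Lambda>)"
    and emeasure_mix_dirac: "A \<in> sets (restrict_space borel \<Lambda>) \<Longrightarrow>
      emeasure (mix_dirac n \<Lambda> w a) A = (\<Sum>i\<in>{1..n}. ennreal (w i) * indicator A (a i))"
proof -
  let ?M = "sets (restrict_space borel \<Lambda>)"
  let ?\<mu> = "\<lambda>A. \<Sum>i\<in>{1..n}. ennreal (w i) * indicator A (a i)"
  have sa: "sigma_algebra \<Lambda> ?M"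
    using sets.sigma_algebra_axioms[of "restrict_space borel \<Lambda>"] by (simp add: space_restrict_space)
  show "sets (mix_dirac n \<Lambda> w a) = ?M"
    unfolding mix_dirac_def using sa
    by (simp add: sets_measure_of sigma_algebra_iff2 sigma_algebra.sigma_sets_eq)
  have "countably_additive ?M ?\<mu>"
  proof (rule countably_additiveI)
    fix A :: "nat \<Rightarrow> real set" assume "disjoint_family A"
    have "(\<Sum>k. ?\<mu> (A k)) = (\<Sum>i\<in>{1..n}. \<Sum>k. ennreal (w i) * indicator (A k) (a i))"
      by (rule suminf_sum) (simp add: summableI)
    also have "\<dots> = ?\<mu> (\<Union>k. A k)" using suminf_indicator[OF \<open>disjoint_family A\<close>] by simp
    finally show "(\<Sum>k. ?\<mu> (A k)) = ?\<mu> (\<Union>k. A k)" .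
  qed
  moreover have "positive ?M ?\<mu>" by (simp add: positive_def)
  ultimately show "A \<in> ?M \<Longrightarrow> emeasure (mix_dirac n \<Lambda> w a) A = ?\<mu> A"
    unfolding mix_dirac_def by (intro emeasure_measure_of_sigma[OF sa])
qed

context weight_vector
begin

lemma mix_dirac_Pset:
  assumes \<Lambda>: "\<Lambda> \<in> sets borel" and a: "\<And>i. i \<in> {1..n} \<Longrightarrow> a i \<in> \<Lambda>"
  shows "mix_dirac n \<Lambda> w a \<in> Pset \<Lambda>"
proof -
  have space: "space (mix_dirac n \<Lambda> w a) = \<Lambda>"
    using sets_eq_imp_space_eq[OF sets_mix_dirac] by (simp add: space_restrict_space)
  have "emeasure (mix_dirac n \<Lambda> w a) \<Lambda> = (\<Sum>i\<in>{1..n}. ennreal (w i))"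
    using \<Lambda> a by (subst emeasure_mix_dirac) (auto simp: sets_restrict_space_iff)
  also have "\<dots> = 1" using weight_nonneg weight_sum by (subst sum_ennreal) auto
  finally have "prob_space (mix_dirac n \<Lambda> w a)" using space by (intro prob_spaceI) simp
  thus ?thesis by (simp add: Pset_def sets_mix_dirac)
qed

lemma cdf_pi_mix_dirac:
  assumes \<Lambda>: "\<Lambda> \<in> sets borel" and a: "\<And>i. i \<in> {1..n} \<Longrightarrow> a i \<in> \<Lambda>"
  shows "cdf_pi \<Lambda> (mix_dirac n \<Lambda> w a) x = (\<Sum>i\<in>{i\<in>{1..n}. a i \<le> x}. w i)"
proof -
  have "emeasure (mix_dirac n \<Lambda> w a) {y\<in>\<Lambda>. y \<le> x} = (\<Sum>i\<in>{i\<in>{1..n}. a i \<le> x}. ennreal (w i))"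
    using \<Lambda> a by (subst emeasure_mix_dirac) (auto simp: sets_restrict_space_iff Int_def intro: sum.cong)
  also have "\<dots> = ennreal (\<Sum>i\<in>{i\<in>{1..n}. a i \<le> x}. w i)"
    using weight_nonneg by (subst sum_ennreal) auto
  finally have "emeasure (mix_dirac n \<Lambda> w a) {y\<in>\<Lambda>. y \<le> x} = ennreal (\<Sum>i\<in>{i\<in>{1..n}. a i \<le> x}. w i)" .
  moreover have "0 \<le> (\<Sum>i\<in>{i\<in>{1..n}. a i \<le> x}. w i)" by (rule sum_weight_subset) auto
  ultimately show ?thesis by (simp add: cdf_pi_def measure_def)
qed

end

section \<open>Domination of distributions by their increments\<close>

lemma sum_measure_compl:
  assumes "\<And>i. i \<in> I \<Longrightarrow> real_distribution (M i)" "A \<in> sets borel"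
  shows "(\<Sum>i\<in>I. c i * measure (M i) (UNIV - A)) = sum c I - (\<Sum>i\<in>I. c i * measure (M i) A)"
proof -
  have "measure (M i) (UNIV - A) = 1 - measure (M i) A" if "i \<in> I" for i
  proof -
    interpret real_distribution "M i" using assms(1) that .
    show ?thesis using prob_compl[of A] assms(2) by simp
  qed
  thus ?thesis by (simp add: right_diff_distrib sum_subtractf)
qed

lemma sums_sum_measure:
  assumes "\<And>i. i \<in> I \<Longrightarrow> real_distribution (M i)"
    and "disjoint_family A" "range A \<subseteq> sets borel"
  shows "(\<lambda>k. \<Sum>i\<in>I. c i * measure (M i) (A k)) sums (\<Sum>i\<in>I. c i * measure (M i) (\<Union>k. A k))"
proof (intro sums_sum sums_mult)
  fix i assume "i \<in> I"
  then interpret real_distribution "M i" by (rule assms(1))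
  show "(\<lambda>k. measure (M i) (A k)) sums measure (M i) (\<Union>k. A k)"
    using assms(2,3) by (intro measure_UNION) (auto simp: emeasure_eq_measure)
qed

lemma tendsto_sum_cdf_at_top:
  assumes "\<And>i. i \<in> I \<Longrightarrow> real_distribution (M i)"
  shows "((\<lambda>x. \<Sum>i\<in>I. c i * cdf (M i) x) \<longlongrightarrow> sum c I) at_top"
proof -
  have "((\<lambda>x. \<Sum>i\<in>I. c i * cdf (M i) x) \<longlongrightarrow> (\<Sum>i\<in>I. c i * 1)) at_top"
    using real_distribution.cdf_lim_at_top_prob[OF assms] by (intro tendsto_intros) auto
  thus ?thesis by simp
qed

lemma sum_measure_eq_if_sum_cdf_eq:
  assumes M: "\<And>i. i \<in> I \<Longrightarrow> real_distribution (M i)" and N: "\<And>j. j \<in> J \<Longrightarrow> real_distribution (N j)"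
    and cdf: "\<And>x. (\<Sum>i\<in>I. c i * cdf (M i) x) = (\<Sum>j\<in>J. d j * cdf (N j) x)"
    and B: "B \<in> sets borel"
  shows "(\<Sum>i\<in>I. c i * measure (M i) B) = (\<Sum>j\<in>J. d j * measure (N j) B)"
proof -
  have "((\<lambda>x. \<Sum>i\<in>I. c i * cdf (M i) x) \<longlongrightarrow> sum c I) at_top"
    using M by (rule tendsto_sum_cdf_at_top)
  moreover have "((\<lambda>x. \<Sum>i\<in>I. c i * cdf (M i) x) \<longlongrightarrow> sum d J) at_top"
    unfolding cdf using N by (rule tendsto_sum_cdf_at_top)
  ultimately have mass: "sum c I = sum d J" by (rule tendsto_unique[OF trivial_limit_at_top_linorder])
  have "Int_stable (range (atMost :: real \<Rightarrow> real set))" by (auto simp: Int_stable_def)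
  moreover have "range (atMost :: real \<Rightarrow> real set) \<subseteq> Pow UNIV" by simp
  moreover have "B \<in> sigma_sets UNIV (range atMost)" using B by (simp add: borel_eq_atMost)
  ultimately show ?thesis
  proof (induction rule: sigma_sets_induct_disjoint)
    case (basic A)
    then obtain a where "A = {..a}" by blast
    thus ?case using cdf[of a] by (simp add: cdf_def)
  next
    case (compl A)
    hence "A \<in> sets borel" by (simp add: borel_eq_atMost)
    thus ?case using compl.IH mass by (simp add: sum_measure_compl[of I M, OF M] sum_measure_compl[of J N, OF N])
  next
    case (union A)
    hence "range A \<subseteq> sets borel" by (simp add: borel_eq_atMost)
    hence "(\<lambda>k. \<Sum>i\<in>I. c i * measure (M i) (A k)) sums (\<Sum>i\<in>I. c i * measure (M i) (\<Union>k. A k))"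
      "(\<lambda>k. \<Sum>j\<in>J. d j * measure (N j) (A k)) sums (\<Sum>j\<in>J. d j * measure (N j) (\<Union>k. A k))"
      using union.hyps by (intro sums_sum_measure M N; simp)+
    thus ?case using union.IH by (simp add: sums_unique2)
  qed simp
qed

lemma real_distribution_increment_gap:
  fixes M :: "real measure" and N :: "'j \<Rightarrow> real measure"
  assumes M: "real_distribution M" and J: "finite J" "j0 \<in> J"
    and N: "\<And>j. j \<in> J \<Longrightarrow> real_distribution (N j)"
    and incr: "\<And>x y. x \<le> y \<Longrightarrow> cdf M y - cdf M x \<le> (\<Sum>j\<in>J. cdf (N j) y - cdf (N j) x)"
  defines "K \<equiv> \<lambda>x. ((\<Sum>j\<in>J. cdf (N j) x) - cdf M x + cdf (N j0) x) / card J"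
  shows "real_distribution (interval_measure K)" "cdf (interval_measure K) = K"
proof -
  interpret M: real_distribution M by fact
  interpret N0: real_distribution "N j0" using N J(2) .
  have Nj: "continuous (at_right x) (cdf (N j))" "(cdf (N j) \<longlongrightarrow> 0) at_bot" "(cdf (N j) \<longlongrightarrow> 1) at_top"
    if "j \<in> J" for j x
  proof -
    interpret real_distribution "N j" using N that .
    show "continuous (at_right x) (cdf (N j))" "(cdf (N j) \<longlongrightarrow> 0) at_bot" "(cdf (N j) \<longlongrightarrow> 1) at_top"
      by (rule cdf_is_right_cont cdf_lim_at_bot cdf_lim_at_top_prob)+
  qed
  have card: "0 < real (card J)" using J by (auto simp: card_gt_0_iff)
  have mono: "K x \<le> K y" if "x \<le> y" for x y
    unfolding K_def using incr[OF that] N0.cdf_nondecreasing[OF that] card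
    by (intro divide_right_mono) (auto simp: sum_subtractf)
  have rc: "continuous (at_right x) K" for x
    unfolding K_def using J(2) Nj(1) M.cdf_is_right_cont card by (intro continuous_intros) auto
  have "(K \<longlongrightarrow> ((\<Sum>j\<in>J. 0) - 0 + 0) / card J) at_bot"
    unfolding K_def using J(2) Nj(2) M.cdf_lim_at_bot card by (intro tendsto_intros) auto
  hence bot: "(K \<longlongrightarrow> 0) at_bot" by simp
  have "(K \<longlongrightarrow> ((\<Sum>j\<in>J. 1) - 1 + 1) / card J) at_top"
    unfolding K_def using J(2) Nj(3) M.cdf_lim_at_top_prob card by (intro tendsto_intros) auto
  hence top: "(K \<longlongrightarrow> 1) at_top" using card by simp
  show "real_distribution (interval_measure K)" using mono rc bot top by (rule real_distribution_interval_measure)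
  show "cdf (interval_measure K) = K" using mono rc bot by (rule cdf_interval_measure)
qed

text \<open>With \<open>\<kappa>\<close> the distribution of \<open>real_distribution_increment_gap\<close>, the inequality between the
  increments becomes the identity \<open>M + card J \<cdot> \<kappa> = \<Sum>\<^sub>j N\<^sub>j + N\<^sub>j\<^sub>0\<close> of measures.\<close>
lemma measure_le_sum_measure_if_cdf_increments_le:
  fixes M :: "real measure" and N :: "'j \<Rightarrow> real measure"
  assumes M: "real_distribution M" and J: "finite J" "j0 \<in> J"
    and N: "\<And>j. j \<in> J \<Longrightarrow> real_distribution (N j)"
    and incr: "\<And>x y. x \<le> y \<Longrightarrow> cdf M y - cdf M x \<le> (\<Sum>j\<in>J. cdf (N j) y - cdf (N j) x)"
    and B: "B \<in> sets borel"
  shows "measure M B \<le> 2 * (\<Sum>j\<in>J. measure (N j) B)"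
proof -
  define K where "K x = ((\<Sum>j\<in>J. cdf (N j) x) - cdf M x + cdf (N j0) x) / card J" for x
  note \<kappa> = real_distribution_increment_gap[OF M J N incr, folded K_def]
  have card: "0 < real (card J)" using J by (auto simp: card_gt_0_iff)
  let ?d = "\<lambda>j. if j = j0 then 2 else 1 :: real"
  have d_sum: "(\<Sum>j\<in>J. ?d j * f j) = (\<Sum>j\<in>J. f j) + f j0" for f :: "'j \<Rightarrow> real"
  proof -
    have "(\<Sum>j\<in>J. ?d j * f j) = (\<Sum>j\<in>J. f j + (if j = j0 then f j else 0))" by (intro sum.cong) auto
    thus ?thesis using J by (simp add: sum.distrib)
  qed
  have "(\<Sum>i<2. [1, real (card J)] ! i * measure ([M, interval_measure K] ! i) B)
      = (\<Sum>j\<in>J. ?d j * measure (N j) B)"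
  proof (rule sum_measure_eq_if_sum_cdf_eq[OF _ N _ B])
    show "\<And>i. i \<in> {..<2} \<Longrightarrow> real_distribution ([M, interval_measure K] ! i)"
      using M \<kappa> by (auto simp: less_2_cases_iff)
    show "(\<Sum>i<2. [1, real (card J)] ! i * cdf ([M, interval_measure K] ! i) x)
        = (\<Sum>j\<in>J. ?d j * cdf (N j) x)" for x
      using card by (simp add: numeral_2_eq_2 \<kappa>(2) K_def d_sum)
  qed
  hence "measure M B + card J * measure (interval_measure K) B
      = (\<Sum>j\<in>J. measure (N j) B) + measure (N j0) B"
    by (simp add: numeral_2_eq_2 d_sum)
  moreover have "measure (N j0) B \<le> (\<Sum>j\<in>J. measure (N j) B)"
    using J by (intro member_le_sum) auto
  moreover have "0 \<le> card J * measure (interval_measure K) B" by simp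
  ultimately show ?thesis by linarith
qed

section \<open>The threshold aggregation function\<close>

definition mu_cdf :: "nat \<Rightarrow> (nat \<Rightarrow> real) \<Rightarrow> real set \<Rightarrow> (nat \<Rightarrow> real measure) \<Rightarrow> real \<Rightarrow> real" where
  "mu_cdf n w \<Lambda> p x = mu_w n w (\<lambda>i. cdf_pi \<Lambda> (p i) x)"

definition mu_PAF :: "nat \<Rightarrow> (nat \<Rightarrow> real) \<Rightarrow> real set \<Rightarrow> (nat \<Rightarrow> real measure) \<Rightarrow> real measure" where
  "mu_PAF n w \<Lambda> p = restrict_space (interval_measure (mu_cdf n w \<Lambda> p)) \<Lambda>"

context weight_vector
begin

context
  fixes \<Lambda> :: "real set" and p :: "nat \<Rightarrow> real measure"
  assumes \<Lambda>: "\<Lambda> \<in> sets borel" and p: "p \<in> profiles n \<Lambda>"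
begin

lemma cdf_pi_profile:
  assumes "i \<in> {1..n}"
  shows "0 \<le> cdf_pi \<Lambda> (p i) x" "cdf_pi \<Lambda> (p i) x \<le> 1"
    "x \<le> y \<Longrightarrow> cdf_pi \<Lambda> (p i) x \<le> cdf_pi \<Lambda> (p i) y"
    "continuous (at_right x) (cdf_pi \<Lambda> (p i))"
    "(cdf_pi \<Lambda> (p i) \<longlongrightarrow> 0) at_bot" "(cdf_pi \<Lambda> (p i) \<longlongrightarrow> 1) at_top"
  using cdf_pi_Pset[OF \<Lambda> profiles_Pset[OF p assms]] by auto

lemma mu_cdf_lipschitz:
  "\<bar>mu_cdf n w \<Lambda> p y - mu_w n w r\<bar> \<le> (\<Sum>i\<in>{1..n}. \<bar>cdf_pi \<Lambda> (p i) y - r i\<bar>)"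
  unfolding mu_cdf_def by (rule mu_w_lipschitz) (auto intro: member_le_sum)

lemma tendsto_mu_cdf:
  assumes "\<And>i. i \<in> {1..n} \<Longrightarrow> (cdf_pi \<Lambda> (p i) \<longlongrightarrow> r i) F"
  shows "(mu_cdf n w \<Lambda> p \<longlongrightarrow> mu_w n w r) F"
proof -
  have "((\<lambda>y. \<Sum>i\<in>{1..n}. \<bar>cdf_pi \<Lambda> (p i) y - r i\<bar>) \<longlongrightarrow> (\<Sum>i\<in>{1..n}. \<bar>r i - r i\<bar>)) F"
  proof (rule tendsto_sum)
    fix i assume "i \<in> {1..n}"
    have "((\<lambda>y. cdf_pi \<Lambda> (p i) y - r i) \<longlongrightarrow> r i - r i) F"
      by (rule tendsto_diff[OF assms[OF \<open>i \<in> {1..n}\<close>] tendsto_const])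
    then show "((\<lambda>y. \<bar>cdf_pi \<Lambda> (p i) y - r i\<bar>) \<longlongrightarrow> \<bar>r i - r i\<bar>) F"
      by (rule tendsto_rabs)
  qed
  hence "((\<lambda>y. \<Sum>i\<in>{1..n}. \<bar>cdf_pi \<Lambda> (p i) y - r i\<bar>) \<longlongrightarrow> 0) F"
    by simp
  moreover have "\<forall>\<^sub>F y in F. norm (mu_cdf n w \<Lambda> p y - mu_w n w r) \<le> (\<Sum>i\<in>{1..n}. \<bar>cdf_pi \<Lambda> (p i) y - r i\<bar>)"
    using mu_cdf_lipschitz by simp
  ultimately have "((\<lambda>y. mu_cdf n w \<Lambda> p y - mu_w n w r) \<longlongrightarrow> 0) F"
    by (rule Lim_null_comparison[rotated])
  thus ?thesis by (rule LIM_zero_cancel)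
qed

lemma mu_cdf_increment:
  assumes "x \<le> y"
  shows "mu_cdf n w \<Lambda> p x \<le> mu_cdf n w \<Lambda> p y"
    "mu_cdf n w \<Lambda> p y - mu_cdf n w \<Lambda> p x \<le> (\<Sum>i\<in>{1..n}. cdf_pi \<Lambda> (p i) y - cdf_pi \<Lambda> (p i) x)"
proof -
  show "mu_cdf n w \<Lambda> p x \<le> mu_cdf n w \<Lambda> p y"
    unfolding mu_cdf_def using cdf_pi_profile(3)[OF _ assms] by (intro mu_w_mono)
  have "\<bar>cdf_pi \<Lambda> (p i) y - cdf_pi \<Lambda> (p i) x\<bar> = cdf_pi \<Lambda> (p i) y - cdf_pi \<Lambda> (p i) x"
    if "i \<in> {1..n}" for i
    using cdf_pi_profile(3)[OF that assms] by simp
  thus "mu_cdf n w \<Lambda> p y - mu_cdf n w \<Lambda> p x \<le> (\<Sum>i\<in>{1..n}. cdf_pi \<Lambda> (p i) y - cdf_pi \<Lambda> (p i) x)"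
    using mu_cdf_lipschitz[of y "\<lambda>i. cdf_pi \<Lambda> (p i) x"] by (simp add: mu_cdf_def)
qed

lemma real_distribution_mu_cdf:
  "real_distribution (interval_measure (mu_cdf n w \<Lambda> p))"
  "cdf (interval_measure (mu_cdf n w \<Lambda> p)) = mu_cdf n w \<Lambda> p"
proof -
  have rc: "continuous (at_right x) (mu_cdf n w \<Lambda> p)" for x
  proof -
    have "(mu_cdf n w \<Lambda> p \<longlongrightarrow> mu_w n w (\<lambda>i. cdf_pi \<Lambda> (p i) x)) (at_right x)"
      using cdf_pi_profile(4) by (intro tendsto_mu_cdf) (simp add: continuous_within)
    thus ?thesis unfolding continuous_within by (simp only: mu_cdf_def[of n w \<Lambda> p x])
  qed
  have bot: "(mu_cdf n w \<Lambda> p \<longlongrightarrow> 0) at_bot"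
    using tendsto_mu_cdf[OF cdf_pi_profile(5)] by (simp add: mu_w_zero)
  have top: "(mu_cdf n w \<Lambda> p \<longlongrightarrow> 1) at_top"
    using tendsto_mu_cdf[OF cdf_pi_profile(6)] by (simp add: mu_w_const_one)
  show "real_distribution (interval_measure (mu_cdf n w \<Lambda> p))"
    using mu_cdf_increment(1) rc bot top by (rule real_distribution_interval_measure)
  show "cdf (interval_measure (mu_cdf n w \<Lambda> p)) = mu_cdf n w \<Lambda> p"
    using mu_cdf_increment(1) rc bot by (rule cdf_interval_measure)
qed

lemma measure_mu_cdf_le:
  assumes "B \<in> sets borel"
  shows "measure (interval_measure (mu_cdf n w \<Lambda> p)) B \<le> 2 * (\<Sum>i\<in>{1..n}. measure (p i) (B \<inter> \<Lambda>))"
proof -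
  let ?N = "\<lambda>i. distr (p i) borel (\<lambda>x. x)"
  have N: "real_distribution (?N i)" "cdf (?N i) = cdf_pi \<Lambda> (p i)"
    "measure (?N i) B = measure (p i) (B \<inter> \<Lambda>)" if "i \<in> {1..n}" for i
    using real_distribution_distr_Pset cdf_distr_Pset measure_distr_Pset assms
      \<Lambda> profiles_Pset[OF p that] by auto
  have "measure (interval_measure (mu_cdf n w \<Lambda> p)) B \<le> 2 * (\<Sum>i\<in>{1..n}. measure (?N i) B)"
    using real_distribution_mu_cdf one_in_agents N(1,2) mu_cdf_increment(2) assms
    by (intro measure_le_sum_measure_if_cdf_increments_le) auto
  thus ?thesis using N(3) by simp
qed

lemma measure_mu_cdf_compl: "measure (interval_measure (mu_cdf n w \<Lambda> p)) (- \<Lambda>) = 0"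
proof -
  have "measure (interval_measure (mu_cdf n w \<Lambda> p)) (- \<Lambda>) \<le> 0"
    using measure_mu_cdf_le[of "- \<Lambda>"] \<Lambda> by simp
  thus ?thesis using measure_nonneg[of _ "- \<Lambda>"] by (intro antisym)
qed

lemma measure_mu_cdf_Int:
  assumes "B \<in> sets borel"
  shows "measure (interval_measure (mu_cdf n w \<Lambda> p)) (B \<inter> \<Lambda>) = measure (interval_measure (mu_cdf n w \<Lambda> p)) B"
proof -
  interpret real_distribution "interval_measure (mu_cdf n w \<Lambda> p)" by (rule real_distribution_mu_cdf)
  have "prob (B - \<Lambda>) = 0"
    using assms \<Lambda> by (intro measure_eq_0_if_disjoint[OF \<Lambda> measure_mu_cdf_compl]) auto
  moreover have "prob B = prob (B \<inter> \<Lambda>) + prob (B - \<Lambda>)"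
    using assms \<Lambda> by (subst finite_measure_Union[symmetric]) (auto intro: arg_cong[where f=prob])
  ultimately show ?thesis by simp
qed

lemma measure_mu_PAF:
  "A \<subseteq> \<Lambda> \<Longrightarrow> measure (mu_PAF n w \<Lambda> p) A = measure (interval_measure (mu_cdf n w \<Lambda> p)) A"
  unfolding mu_PAF_def using \<Lambda> by (intro measure_restrict_space) auto

lemma mu_PAF_Pset: "mu_PAF n w \<Lambda> p \<in> Pset \<Lambda>"
proof -
  interpret real_distribution "interval_measure (mu_cdf n w \<Lambda> p)" by (rule real_distribution_mu_cdf)
  have "emeasure (interval_measure (mu_cdf n w \<Lambda> p)) \<Lambda> = 1"
    using measure_mu_cdf_Int[of UNIV] prob_space by (simp add: emeasure_eq_measure)
  hence "prob_space (mu_PAF n w \<Lambda> p)" unfolding mu_PAF_def using \<Lambda> by (intro prob_space_restrict_space) auto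
  thus ?thesis by (simp add: Pset_def mu_PAF_def sets_restrict_space)
qed

lemma cdf_pi_mu_PAF: "cdf_pi \<Lambda> (mu_PAF n w \<Lambda> p) x = mu_cdf n w \<Lambda> p x"
proof -
  have "{y\<in>\<Lambda>. y \<le> x} = {..x} \<inter> \<Lambda>" by auto
  hence "cdf_pi \<Lambda> (mu_PAF n w \<Lambda> p) x = cdf (interval_measure (mu_cdf n w \<Lambda> p)) x"
    using measure_mu_PAF[of "{y\<in>\<Lambda>. y \<le> x}"] measure_mu_cdf_Int[of "{..x}"]
    by (simp add: cdf_pi_def cdf_def)
  thus ?thesis using real_distribution_mu_cdf(2) by simp
qed

lemma measure_mu_PAF_eq_1:
  assumes A: "A \<in> sets (restrict_space borel \<Lambda>)" and one: "\<And>i. i \<in> {1..n} \<Longrightarrow> measure (p i) A = 1"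
  shows "measure (mu_PAF n w \<Lambda> p) A = 1"
proof -
  interpret real_distribution "interval_measure (mu_cdf n w \<Lambda> p)" by (rule real_distribution_mu_cdf)
  have A': "A \<in> sets borel" "A \<subseteq> \<Lambda>" using A \<Lambda> by (auto simp: sets_restrict_space_iff)
  have "measure (p i) (- A \<inter> \<Lambda>) = 0" if i: "i \<in> {1..n}" for i
  proof -
    interpret P: prob_space "p i" using Pset_D(1)[OF profiles_Pset[OF p i]] .
    have "- A \<inter> \<Lambda> = space (p i) - A" using Pset_D(3)[OF profiles_Pset[OF p i]] by auto
    thus ?thesis using P.prob_compl[of A] one[OF i] A Pset_D(2)[OF profiles_Pset[OF p i]] by simp
  qed
  hence "prob (- A) \<le> 0" using measure_mu_cdf_le[of "- A"] A' by simp
  hence "1 \<le> prob A" using prob_compl[of A] A' by (simp add: Compl_eq_Diff_UNIV)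
  hence "prob A = 1" using prob_le_1[of A] by linarith
  thus ?thesis using measure_mu_PAF[OF A'(2)] by simp
qed

end

context
  fixes \<Lambda> :: "real set"
  assumes \<Lambda>: "\<Lambda> \<in> sets borel"
begin

lemma mu_PAF_level_SP: "level_SP n \<Lambda> (mu_PAF n w \<Lambda>)"
  unfolding level_SP_def
proof (intro ballI conjI impI)
  fix i p p' a assume i: "i \<in> {1..n}" and p: "p \<in> profiles n \<Lambda>" and p': "p' \<in> Pset \<Lambda>"
  have upd: "(\<lambda>j. cdf_pi \<Lambda> ((p(i := p')) j) a) = (\<lambda>j. cdf_pi \<Lambda> (p j) a)(i := cdf_pi \<Lambda> p' a)"
    by (auto simp: fun_eq_iff)
  note cdf = cdf_pi_mu_PAF[OF \<Lambda> p] cdf_pi_mu_PAF[OF \<Lambda> profiles_update[OF p i p']]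
  show "cdf_pi \<Lambda> (mu_PAF n w \<Lambda> p) a \<le> cdf_pi \<Lambda> (mu_PAF n w \<Lambda> (p(i := p'))) a"
    if "cdf_pi \<Lambda> (p i) a < cdf_pi \<Lambda> (mu_PAF n w \<Lambda> p) a"
    using that unfolding cdf mu_cdf_def upd by (intro mu_w_update_below) simp
  show "cdf_pi \<Lambda> (mu_PAF n w \<Lambda> (p(i := p'))) a \<le> cdf_pi \<Lambda> (mu_PAF n w \<Lambda> p) a"
    if "cdf_pi \<Lambda> (mu_PAF n w \<Lambda> p) a < cdf_pi \<Lambda> (p i) a"
    using that unfolding cdf mu_cdf_def upd by (intro mu_w_update_above) simp
qed

lemma mu_PAF_weighted_prop: "weighted_prop n \<Lambda> w (mu_PAF n w \<Lambda>)"
  unfolding weighted_prop_def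
proof (intro allI impI)
  fix x :: "nat \<Rightarrow> real" assume x: "\<forall>i\<in>{1..n}. x i \<in> \<Lambda>"
  let ?\<delta> = "\<lambda>i\<in>{1..n}. dirac_on \<Lambda> (x i)"
  have \<delta>: "?\<delta> \<in> profiles n \<Lambda>" using x by (intro dirac_profile) auto
  show "mu_PAF n w \<Lambda> ?\<delta> = mix_dirac n \<Lambda> w x"
  proof (rule Pset_eqI_cdf_pi[OF \<Lambda> mu_PAF_Pset[OF \<Lambda> \<delta>] mix_dirac_Pset[OF \<Lambda>]])
    fix a
    let ?H = "{i\<in>{1..n}. x i \<le> a}"
    have "cdf_pi \<Lambda> (mu_PAF n w \<Lambda> ?\<delta>) a = mu_w n w (\<lambda>i. if i \<in> ?H then 1 else 0)"
      unfolding cdf_pi_mu_PAF[OF \<Lambda> \<delta>] mu_cdf_def using cdf_pi_dirac_on[OF \<Lambda>] x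
      by (intro mu_w_cong) auto
    also have "\<dots> = cdf_pi \<Lambda> (mix_dirac n \<Lambda> w x) a"
      using cdf_pi_mix_dirac[OF \<Lambda>] x by (subst mu_w_indicator) auto
    finally show "cdf_pi \<Lambda> (mu_PAF n w \<Lambda> ?\<delta>) a = cdf_pi \<Lambda> (mix_dirac n \<Lambda> w x) a" .
  qed (use x in auto)
qed

end

end

section \<open>Characterization\<close>

lemma profiles_merge_induct:
  assumes p: "p \<in> profiles n \<Lambda>" and t: "t \<in> profiles n \<Lambda>" and "P p"
    and step: "\<And>q i. q \<in> profiles n \<Lambda> \<Longrightarrow> i \<in> {1..n} \<Longrightarrow> q i = p i \<Longrightarrow> P q \<Longrightarrow> P (q(i := t i))"
  shows "P t"
proof -
  let ?m = "\<lambda>J. \<lambda>i\<in>{1..n}. if i \<in> J then t i else p i"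
  have "finite J \<Longrightarrow> J \<subseteq> {1..n} \<Longrightarrow> P (?m J)" for J
  proof (induction J rule: finite_induct)
    case empty
    have "?m {} = p" using p by (auto simp: profiles_def PiE_def extensional_def)
    thus ?case using \<open>P p\<close> by simp
  next
    case (insert i J)
    have eq: "?m (insert i J) = (?m J)(i := t i)" using insert by (auto simp: fun_eq_iff)
    show ?case unfolding eq
    proof (rule step)
      show "?m J \<in> profiles n \<Lambda>"
        using profiles_Pset[OF p] profiles_Pset[OF t] by (auto simp: profiles_def)
      show "i \<in> {1..n}" "?m J i = p i" using insert.prems insert.hyps by auto
      show "P (?m J)" using insert.prems by (intro insert.IH) simp
    qed
  qed
  moreover have "?m {1..n} = t" using t by (auto simp: profiles_def PiE_def extensional_def)
  ultimately show ?thesis by (metis finite_atLeastAtMost order_refl)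
qed

context
  fixes n :: nat and \<Lambda> :: "real set" and \<psi> :: "(nat \<Rightarrow> real measure) \<Rightarrow> real measure" and a :: real
  assumes SP: "level_SP n \<Lambda> \<psi>" and a: "a \<in> \<Lambda>"
begin

lemma level_SP_monotone:
  assumes p: "p \<in> profiles n \<Lambda>" and i: "i \<in> {1..n}" and q: "q \<in> Pset \<Lambda>"
    and le: "cdf_pi \<Lambda> (p i) a \<le> cdf_pi \<Lambda> q a"
  shows "cdf_pi \<Lambda> (\<psi> p) a \<le> cdf_pi \<Lambda> (\<psi> (p(i := q))) a"
proof (rule ccontr)
  let ?p' = "p(i := q)"
  assume neg: "\<not> ?thesis"
  show False
  proof (cases "cdf_pi \<Lambda> (p i) a < cdf_pi \<Lambda> (\<psi> p) a")
    case True
    thus False using SP p i q a neg unfolding level_SP_def by blast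
  next
    case False
    hence "cdf_pi \<Lambda> (\<psi> ?p') a < cdf_pi \<Lambda> (?p' i) a" using neg le by simp
    hence "cdf_pi \<Lambda> (\<psi> (?p'(i := p i))) a \<le> cdf_pi \<Lambda> (\<psi> ?p') a"
      using SP profiles_update[OF p i q] i profiles_Pset[OF p i] a unfolding level_SP_def by blast
    thus False using neg by simp
  qed
qed

lemma level_SP_le_if_raised:
  assumes p: "p \<in> profiles n \<Lambda>" and t: "t \<in> profiles n \<Lambda>"
    and raised: "\<And>i. i \<in> {1..n} \<Longrightarrow> cdf_pi \<Lambda> (\<psi> p) a \<le> cdf_pi \<Lambda> (p i) a \<Longrightarrow>
      cdf_pi \<Lambda> (p i) a \<le> cdf_pi \<Lambda> (t i) a"
  shows "cdf_pi \<Lambda> (\<psi> p) a \<le> cdf_pi \<Lambda> (\<psi> t) a"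
  using p t
proof (rule profiles_merge_induct[where P = "\<lambda>q. cdf_pi \<Lambda> (\<psi> p) a \<le> cdf_pi \<Lambda> (\<psi> q) a"])
  fix q i assume q: "q \<in> profiles n \<Lambda>" and i: "i \<in> {1..n}" and qi: "q i = p i"
    and IH: "cdf_pi \<Lambda> (\<psi> p) a \<le> cdf_pi \<Lambda> (\<psi> q) a"
  have ti: "t i \<in> Pset \<Lambda>" using profiles_Pset[OF t i] .
  have "cdf_pi \<Lambda> (\<psi> q) a \<le> cdf_pi \<Lambda> (\<psi> (q(i := t i))) a"
  proof (cases "cdf_pi \<Lambda> (\<psi> p) a \<le> cdf_pi \<Lambda> (p i) a")
    case True
    thus ?thesis using level_SP_monotone[OF q i ti] raised[OF i] qi by simp
  next
    case False
    thus ?thesis using SP q i ti a IH qi unfolding level_SP_def by fastforce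
  qed
  thus "cdf_pi \<Lambda> (\<psi> p) a \<le> cdf_pi \<Lambda> (\<psi> (q(i := t i))) a" using IH by linarith
qed simp

lemma level_SP_ge_if_lowered:
  assumes p: "p \<in> profiles n \<Lambda>" and t: "t \<in> profiles n \<Lambda>"
    and lowered: "\<And>i. i \<in> {1..n} \<Longrightarrow> cdf_pi \<Lambda> (p i) a \<le> cdf_pi \<Lambda> (\<psi> p) a \<Longrightarrow>
      cdf_pi \<Lambda> (t i) a \<le> cdf_pi \<Lambda> (p i) a"
  shows "cdf_pi \<Lambda> (\<psi> t) a \<le> cdf_pi \<Lambda> (\<psi> p) a"
  using p t
proof (rule profiles_merge_induct[where P = "\<lambda>q. cdf_pi \<Lambda> (\<psi> q) a \<le> cdf_pi \<Lambda> (\<psi> p) a"])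
  fix q i assume q: "q \<in> profiles n \<Lambda>" and i: "i \<in> {1..n}" and qi: "q i = p i"
    and IH: "cdf_pi \<Lambda> (\<psi> q) a \<le> cdf_pi \<Lambda> (\<psi> p) a"
  have ti: "t i \<in> Pset \<Lambda>" using profiles_Pset[OF t i] .
  have "cdf_pi \<Lambda> (\<psi> (q(i := t i))) a \<le> cdf_pi \<Lambda> (\<psi> q) a"
  proof (cases "cdf_pi \<Lambda> (p i) a \<le> cdf_pi \<Lambda> (\<psi> p) a")
    case True
    have "q(i := t i) \<in> profiles n \<Lambda>" using profiles_update[OF q i ti] .
    moreover have "(q(i := t i))(i := q i) = q" by simp
    ultimately show ?thesis
      using level_SP_monotone[of "q(i := t i)" i "q i"] i profiles_Pset[OF q i] lowered[OF i True] qi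
      by simp
  next
    case False
    thus ?thesis using SP q i ti a IH qi unfolding level_SP_def by fastforce
  qed
  thus "cdf_pi \<Lambda> (\<psi> (q(i := t i))) a \<le> cdf_pi \<Lambda> (\<psi> p) a" using IH by linarith
qed simp

end

context weight_vector
begin

lemma cdf_pi_two_point_profile:
  assumes \<Lambda>: "\<Lambda> \<in> sets borel" and WP: "weighted_prop n \<Lambda> w \<psi>"
    and ab: "a \<in> \<Lambda>" "b \<in> \<Lambda>" "a < b" and H: "H \<subseteq> {1..n}"
  shows "cdf_pi \<Lambda> (\<psi> (\<lambda>i\<in>{1..n}. dirac_on \<Lambda> (if i \<in> H then a else b))) a = sum w H"
proof -
  let ?x = "\<lambda>i. if i \<in> H then a else b"
  have "{i\<in>{1..n}. ?x i \<le> a} = H" using H ab by auto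
  thus ?thesis using WP cdf_pi_mix_dirac[OF \<Lambda>, of ?x a] ab by (simp add: weighted_prop_def)
qed

lemma level_SP_weight_bounds:
  assumes \<Lambda>: "\<Lambda> \<in> sets borel" and SP: "level_SP n \<Lambda> \<psi>" and WP: "weighted_prop n \<Lambda> w \<psi>"
    and p: "p \<in> profiles n \<Lambda>" and ab: "a \<in> \<Lambda>" "b \<in> \<Lambda>" "a < b"
  defines "c \<equiv> cdf_pi \<Lambda> (\<psi> p) a" and "r \<equiv> \<lambda>i. cdf_pi \<Lambda> (p i) a"
  shows "c \<le> weight_ge n w r c" "weight_gt n w r c \<le> c"
proof -
  let ?t = "\<lambda>H. \<lambda>i\<in>{1..n}. dirac_on \<Lambda> (if i \<in> H then a else b)"
  have t: "?t H \<in> profiles n \<Lambda>" for H using ab by (intro dirac_profile) auto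
  have t_eq: "cdf_pi \<Lambda> (\<psi> (?t H)) a = sum w H" if "H \<subseteq> {1..n}" for H
    using cdf_pi_two_point_profile[OF \<Lambda> WP ab that] .
  have dirac_a: "cdf_pi \<Lambda> (dirac_on \<Lambda> a) a = 1" and dirac_b: "cdf_pi \<Lambda> (dirac_on \<Lambda> b) a = 0"
    using cdf_pi_dirac_on[OF \<Lambda>] ab by auto
  have r01: "i \<in> {1..n} \<Longrightarrow> 0 \<le> r i \<and> r i \<le> 1" for i
    unfolding r_def using cdf_pi_Pset[OF \<Lambda> profiles_Pset[OF p]] by auto
  have "c \<le> cdf_pi \<Lambda> (\<psi> (?t {i\<in>{1..n}. c \<le> r i})) a"
  proof (rule level_SP_le_if_raised[OF SP ab(1) p t, folded c_def])
    fix i assume "i \<in> {1..n}" "c \<le> cdf_pi \<Lambda> (p i) a"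
    thus "cdf_pi \<Lambda> (p i) a \<le> cdf_pi \<Lambda> (?t {i\<in>{1..n}. c \<le> r i} i) a"
      using r01 dirac_a dirac_b by (simp add: r_def)
  qed
  also have "\<dots> = weight_ge n w r c" unfolding weight_ge_def by (rule t_eq) auto
  finally show "c \<le> weight_ge n w r c" .
  have "weight_gt n w r c = cdf_pi \<Lambda> (\<psi> (?t {i\<in>{1..n}. c < r i})) a"
    unfolding weight_gt_def by (rule t_eq[symmetric]) auto
  also have "\<dots> \<le> c"
  proof (rule level_SP_ge_if_lowered[OF SP ab(1) p t, folded c_def])
    fix i assume "i \<in> {1..n}" "cdf_pi \<Lambda> (p i) a \<le> c"
    thus "cdf_pi \<Lambda> (?t {i\<in>{1..n}. c < r i} i) a \<le> cdf_pi \<Lambda> (p i) a"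
      using r01 dirac_a dirac_b by (simp add: r_def)
  qed
  finally show "weight_gt n w r c \<le> c" .
qed

lemma level_SP_cdf_pi_eq_mu_w:
  assumes \<Lambda>: "\<Lambda> \<in> sets borel" and PAF: "is_PAF n \<Lambda> \<psi>" and SP: "level_SP n \<Lambda> \<psi>"
    and WP: "weighted_prop n \<Lambda> w \<psi>" and p: "p \<in> profiles n \<Lambda>" and a: "a \<in> \<Lambda>"
  shows "cdf_pi \<Lambda> (\<psi> p) a = mu_w n w (\<lambda>i. cdf_pi \<Lambda> (p i) a)"
proof (cases "\<exists>b\<in>\<Lambda>. a < b")
  case True
  then obtain b where b: "b \<in> \<Lambda>" "a < b" by blast
  have "0 \<le> cdf_pi \<Lambda> (\<psi> p) a" "cdf_pi \<Lambda> (\<psi> p) a \<le> 1"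
    using cdf_pi_Pset[OF \<Lambda>] PAF p by (auto simp: is_PAF_def)
  thus ?thesis
    using level_SP_weight_bounds[OF \<Lambda> SP WP p a b] mu_w_eq_iff by metis
next
  case False
  hence "{x\<in>\<Lambda>. x \<le> a} = \<Lambda>" by force
  hence one: "cdf_pi \<Lambda> q a = 1" if "q \<in> Pset \<Lambda>" for q
    using prob_space.prob_space[OF Pset_D(1)[OF that]] Pset_D(3)[OF that] by (simp add: cdf_pi_def)
  have "\<psi> p \<in> Pset \<Lambda>" using PAF p by (simp add: is_PAF_def)
  moreover have "mu_w n w (\<lambda>i. cdf_pi \<Lambda> (p i) a) = 1"
    using one profiles_Pset[OF p] by (intro mu_w_const_one) simp
  ultimately show ?thesis using one by simp
qed

end

theorem mainTheorem12:
  fixes n :: nat and \<Lambda> :: "real set" and w :: "nat \<Rightarrow> real"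
  assumes "\<Lambda> \<in> sets borel" and "\<Lambda> \<noteq> {}"
    and "\<forall>i\<in>{1..n}. 0 \<le> w i" and "(\<Sum>i\<in>{1..n}. w i) = 1"
  shows "\<exists>\<psi>. is_PAF n \<Lambda> \<psi> \<and> level_SP n \<Lambda> \<psi> \<and> weighted_prop n \<Lambda> w \<psi>
     \<and> (\<forall>\<psi>'. is_PAF n \<Lambda> \<psi>' \<and> level_SP n \<Lambda> \<psi>' \<and> weighted_prop n \<Lambda> w \<psi>'
            \<longrightarrow> (\<forall>p\<in>profiles n \<Lambda>. \<psi>' p = \<psi> p))
     \<and> (\<forall>p\<in>profiles n \<Lambda>. \<forall>a\<in>\<Lambda>.
            cdf_pi \<Lambda> (\<psi> p) a = mu_w n w (\<lambda>i. cdf_pi \<Lambda> (p i) a))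
     \<and> certainty_preserving n \<Lambda> \<psi>"
proof (intro exI conjI allI impI ballI)
  note \<Lambda> = assms(1)
  interpret weight_vector n w using assms(3,4) by unfold_locales auto
  let ?\<psi> = "mu_PAF n w \<Lambda>"
  show "is_PAF n \<Lambda> ?\<psi>" using mu_PAF_Pset[OF \<Lambda>] by (simp add: is_PAF_def)
  show "level_SP n \<Lambda> ?\<psi>" using mu_PAF_level_SP[OF \<Lambda>] .
  show "weighted_prop n \<Lambda> w ?\<psi>" using mu_PAF_weighted_prop[OF \<Lambda>] .
  show "cdf_pi \<Lambda> (?\<psi> p) a = mu_w n w (\<lambda>i. cdf_pi \<Lambda> (p i) a)" if "p \<in> profiles n \<Lambda>" for p a
    using cdf_pi_mu_PAF[OF \<Lambda> that] by (simp add: mu_cdf_def)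
  show "certainty_preserving n \<Lambda> ?\<psi>"
    using measure_mu_PAF_eq_1[OF \<Lambda>] by (simp add: certainty_preserving_def)
  fix \<psi>' p
  assume \<psi>': "is_PAF n \<Lambda> \<psi>' \<and> level_SP n \<Lambda> \<psi>' \<and> weighted_prop n \<Lambda> w \<psi>'" and p: "p \<in> profiles n \<Lambda>"
  show "\<psi>' p = ?\<psi> p"
    using \<psi>' p level_SP_cdf_pi_eq_mu_w[OF \<Lambda>] cdf_pi_mu_PAF[OF \<Lambda> p]
    by (intro Pset_eqI_cdf_pi[OF \<Lambda>]) (auto simp: is_PAF_def mu_cdf_def intro: mu_PAF_Pset[OF \<Lambda> p])
qed

end
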